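(* Let $n>1$ and let $p$ be a probability vector on $[n]$ with all $p_j>0$. If $t_1,\dots,t_{n-1}\ge 0$, then $$\exp\left(-\sum_{j=1}^{n-1} t_j\, e^{(p)}_{(j,j)}\right)\in\langle p\rangle^+ .$$
   Context: $1=(1,\dots,1)^T\in\mathbb{R}^n$; $r_j := p_j/p_n$; $e^{(p)}_{(j,k)} := (e_j - r_j e_n)(e_k^T - e_n^T)$ for $j,k\in[n-1]$, with $\{e_j\}$ the standard basis. $\langle p\rangle^+ := \{P\in M_n(\mathbb{R}) : P1=1,\ P\ge 0 \text{ entrywise},\ pP=p\}$ (row-stochastic matrices with invariant measure $p$). *)

theory Defs
  imports "Jordan_Normal_Form.Matrix"
begin

text \<open>Indices: the paper's [n] = {1..n} is rendered as {0..<n}; the paper's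
  last index n becomes n - 1.\<close>

definition mat_exp :: "real mat \<Rightarrow> real mat" where
  "mat_exp A = mat (dim_row A) (dim_col A)
     (\<lambda>(i, j). \<Sum>k. (A ^\<^sub>m k) $$ (i, j) / fact k)"

definition rp :: "nat \<Rightarrow> (nat \<Rightarrow> real) \<Rightarrow> nat \<Rightarrow> real" where
  "rp n p j = p j / p (n - 1)"

text \<open>e^(p)_(j,k) = (e_j - r_j e_n)(e_k^T - e_n^T), an n x n matrix\<close>
definition ep_mat :: "nat \<Rightarrow> (nat \<Rightarrow> real) \<Rightarrow> nat \<Rightarrow> nat \<Rightarrow> real mat" where
  "ep_mat n p j k = mat n n (\<lambda>(a, b).
     ((if a = j then 1 else 0) - rp n p j * (if a = n - 1 then 1 else 0)) *
     ((if b = k then 1 else 0) - (if b = n - 1 then 1 else 0)))"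

definition gen_mat :: "nat \<Rightarrow> (nat \<Rightarrow> real) \<Rightarrow> (nat \<Rightarrow> real) \<Rightarrow> real mat" where
  "gen_mat n p t = mat n n (\<lambda>(a, b). \<Sum>j<n - 1. t j * (ep_mat n p j j $$ (a, b)))"

definition stoch_p :: "nat \<Rightarrow> (nat \<Rightarrow> real) \<Rightarrow> real mat set" where
  "stoch_p n p = {P \<in> carrier_mat n n.
      (\<forall>i<n. (\<Sum>j<n. P $$ (i, j)) = 1) \<and>
      (\<forall>i<n. \<forall>j<n. 0 \<le> P $$ (i, j)) \<and>
      (\<forall>j<n. (\<Sum>i<n. p i * P $$ (i, j)) = p j)}"

end

theory Submission
  imports Defs
begin

text \<open>The matrix \<open>Q = \<Sum>j. t j \<cdot> e(j,j)\<close> has zero row sums, since every row factor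
  \<open>e_k - e_n\<close> does; it satisfies \<open>p Q = 0\<close>, since \<open>p (e_j - r_j e_n) = p_j - r_j p_n = 0\<close>; and
  its off-diagonal entries are nonpositive when all \<open>t j \<ge> 0\<close>. Hence every term \<open>(-Q)^k / k!\<close>
  with \<open>k \<ge> 1\<close> of the exponential series has zero row sums and is annihilated by \<open>p\<close>, so
  \<open>exp (-Q)\<close> has row sums 1 and invariant vector \<open>p\<close>. For nonnegativity choose \<open>c\<close> with
  \<open>B = -Q + c I \<ge> 0\<close>: then \<open>exp (-Q) = exp (-c) \<cdot> exp B\<close> and \<open>exp B \<ge> 0\<close> termwise.\<close>

lemma mat_pow_Suc_entry:
  fixes A :: "real mat"
  assumes "A \<in> carrier_mat n n" and "a < n" and "b < n"
  shows "(A ^\<^sub>m Suc k) $$ (a, b) = (\<Sum>l<n. (A ^\<^sub>m k) $$ (a, l) * A $$ (l, b))"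
  using assms by (simp add: scalar_prod_def lessThan_atLeast0)

lemma binomial_sum_Suc:
  fixes x :: "'a :: comm_ring_1" and F :: "nat \<Rightarrow> 'a"
  shows "(\<Sum>i\<le>k. of_nat (k choose i) * x ^ (k - i) * F (Suc i))
       + (\<Sum>i\<le>k. of_nat (k choose i) * x ^ (Suc k - i) * F i)
       = (\<Sum>i\<le>Suc k. of_nat (Suc k choose i) * x ^ (Suc k - i) * F i)"
proof -
  have "(\<Sum>i\<le>k. of_nat (k choose i) * x ^ (Suc k - i) * F i)
      = (\<Sum>i\<le>Suc k. of_nat (k choose i) * x ^ (Suc k - i) * F i)"
    by (simp add: binomial_eq_0)
  also have "\<dots> = x ^ Suc k * F 0 + (\<Sum>i\<le>k. of_nat (k choose Suc i) * x ^ (k - i) * F (Suc i))"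
    by (subst sum.atMost_Suc_shift) simp
  finally have "(\<Sum>i\<le>k. of_nat (k choose i) * x ^ (k - i) * F (Suc i))
       + (\<Sum>i\<le>k. of_nat (k choose i) * x ^ (Suc k - i) * F i)
      = x ^ Suc k * F 0 + (\<Sum>i\<le>k. of_nat (Suc k choose Suc i) * x ^ (k - i) * F (Suc i))"
    by (simp add: sum.distrib[symmetric] algebra_simps)
  also have "\<dots> = (\<Sum>i\<le>Suc k. of_nat (Suc k choose i) * x ^ (Suc k - i) * F i)"
    by (subst sum.atMost_Suc_shift) simp
  finally show ?thesis .
qed

lemma mat_pow_shifted_entry:
  fixes A B :: "real mat" and c :: real
  assumes A: "A \<in> carrier_mat n n" and B: "B \<in> carrier_mat n n"
    and AB: "\<And>x y. x < n \<Longrightarrow> y < n \<Longrightarrow> A $$ (x, y) = B $$ (x, y) - (if x = y then c else 0)"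
    and a: "a < n" and b: "b < n"
  shows "(A ^\<^sub>m k) $$ (a, b) = (\<Sum>i\<le>k. real (k choose i) * (-c) ^ (k - i) * (B ^\<^sub>m i) $$ (a, b))"
  using b
proof (induction k arbitrary: b)
  case 0
  then show ?case using A B a by simp
next
  case (Suc k)
  define S where "S l = (\<Sum>i\<le>k. real (k choose i) * (-c) ^ (k - i) * (B ^\<^sub>m i) $$ (a, l))" for l
  have "(A ^\<^sub>m Suc k) $$ (a, b) = (\<Sum>l<n. (A ^\<^sub>m k) $$ (a, l) * A $$ (l, b))"
    by (rule mat_pow_Suc_entry[OF A a Suc.prems])
  also have "\<dots> = (\<Sum>l<n. S l * (B $$ (l, b) - (if l = b then c else 0)))"
    using Suc by (intro sum.cong) (auto simp: S_def AB)
  also have "\<dots> = (\<Sum>l<n. S l * B $$ (l, b)) - c * S b"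
    using Suc.prems by (simp add: right_diff_distrib sum_subtractf if_distrib[of "(*) _"] sum.delta mult.commute cong: if_cong)
  also have "(\<Sum>l<n. S l * B $$ (l, b))
      = (\<Sum>i\<le>k. real (k choose i) * (-c) ^ (k - i) * (\<Sum>l<n. (B ^\<^sub>m i) $$ (a, l) * B $$ (l, b)))"
    by (simp add: S_def sum_distrib_left sum_distrib_right sum.swap[of _ "{..<n}"] mult.assoc)
  also have "\<dots> = (\<Sum>i\<le>k. real (k choose i) * (-c) ^ (k - i) * (B ^\<^sub>m Suc i) $$ (a, b))"
    by (simp only: mat_pow_Suc_entry[OF B a Suc.prems])
  also have "c * S b = - (\<Sum>i\<le>k. real (k choose i) * (-c) ^ (Suc k - i) * (B ^\<^sub>m i) $$ (a, b))"
    by (simp add: S_def sum_distrib_left Suc_diff_le sum_negf[symmetric] ac_simps)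
  finally show ?case
    using binomial_sum_Suc[of k "-c" "\<lambda>i. (B ^\<^sub>m i) $$ (a, b)"] by simp
qed

lemma mat_pow_entry_nonneg:
  fixes B :: "real mat"
  assumes B: "B \<in> carrier_mat n n"
    and nonneg: "\<And>x y. x < n \<Longrightarrow> y < n \<Longrightarrow> 0 \<le> B $$ (x, y)"
    and "a < n" and "b < n"
  shows "0 \<le> (B ^\<^sub>m k) $$ (a, b)"
  using \<open>b < n\<close>
proof (induction k arbitrary: b)
  case 0
  then show ?case using B \<open>a < n\<close> by simp
next
  case (Suc k)
  then show ?case
    unfolding mat_pow_Suc_entry[OF B \<open>a < n\<close> Suc.prems]
    using nonneg by (auto intro!: sum_nonneg)
qed

lemma mat_pow_entry_abs_le:
  fixes A :: "real mat"
  assumes A: "A \<in> carrier_mat n n" and "0 \<le> M"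
    and bound: "\<And>x y. x < n \<Longrightarrow> y < n \<Longrightarrow> \<bar>A $$ (x, y)\<bar> \<le> M"
    and "a < n" and "b < n"
  shows "\<bar>(A ^\<^sub>m k) $$ (a, b)\<bar> \<le> (real n * M) ^ k"
  using \<open>b < n\<close>
proof (induction k arbitrary: b)
  case 0
  then show ?case using A \<open>a < n\<close> by simp
next
  case (Suc k)
  have "\<bar>(A ^\<^sub>m Suc k) $$ (a, b)\<bar> \<le> (\<Sum>l<n. \<bar>(A ^\<^sub>m k) $$ (a, l)\<bar> * \<bar>A $$ (l, b)\<bar>)"
    unfolding mat_pow_Suc_entry[OF A \<open>a < n\<close> Suc.prems] abs_mult[symmetric] by (rule sum_abs)
  also have "\<dots> \<le> (\<Sum>l<n. (real n * M) ^ k * M)"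
    using Suc bound \<open>0 \<le> M\<close> by (intro sum_mono mult_mono) auto
  also have "\<dots> = (real n * M) ^ Suc k" by simp
  finally show ?case .
qed

lemma summable_norm_mat_exp_entry:
  fixes A :: "real mat"
  assumes A: "A \<in> carrier_mat n n" and "a < n" and "b < n"
  shows "summable (\<lambda>k. norm ((A ^\<^sub>m k) $$ (a, b) / fact k))"
proof -
  define M where "M = (\<Sum>x<n. \<Sum>y<n. \<bar>A $$ (x, y)\<bar>)"
  have bound: "\<bar>A $$ (x, y)\<bar> \<le> M" if "x < n" "y < n" for x y
  proof -
    have "\<bar>A $$ (x, y)\<bar> \<le> (\<Sum>y<n. \<bar>A $$ (x, y)\<bar>)"
      using that by (intro member_le_sum) auto
    also have "\<dots> \<le> M" unfolding M_def
      using that by (intro member_le_sum[of x "{..<n}"]) (auto intro: sum_nonneg)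
    finally show ?thesis .
  qed
  have "0 \<le> M" unfolding M_def by (simp add: sum_nonneg)
  show ?thesis
  proof (rule summable_comparison_test'[OF summable_exp[of "real n * M"], of 0])
    fix k :: nat
    show "norm (norm ((A ^\<^sub>m k) $$ (a, b) / fact k)) \<le> inverse (fact k) * (real n * M) ^ k"
      using mat_pow_entry_abs_le[OF A \<open>0 \<le> M\<close> bound assms(2,3), of k]
      by (auto simp: divide_inverse abs_mult intro!: mult_left_mono)
  qed
qed

lemma mat_exp_entry_sums:
  fixes A :: "real mat"
  assumes A: "A \<in> carrier_mat n n" and "a < n" and "b < n"
  shows "(\<lambda>k. (A ^\<^sub>m k) $$ (a, b) / fact k) sums (mat_exp A $$ (a, b))"
proof -
  have "summable (\<lambda>k. (A ^\<^sub>m k) $$ (a, b) / fact k)"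
    using summable_norm_mat_exp_entry[OF assms] by (rule summable_norm_cancel)
  then show ?thesis using assms by (simp add: mat_exp_def summable_sums)
qed

text \<open>Writing \<open>A = B - c I\<close> with \<open>B \<ge> 0\<close>, the exponential series of \<open>A\<close> is the Cauchy
  product of that of \<open>B\<close> with the series of \<open>exp (-c)\<close>.\<close>
lemma mat_exp_entry_nonneg:
  fixes A :: "real mat"
  assumes A: "A \<in> carrier_mat n n"
    and offdiag: "\<And>x y. x < n \<Longrightarrow> y < n \<Longrightarrow> x \<noteq> y \<Longrightarrow> 0 \<le> A $$ (x, y)"
    and a: "a < n" and b: "b < n"
  shows "0 \<le> mat_exp A $$ (a, b)"
proof -
  define c where "c = (\<Sum>x<n. \<bar>A $$ (x, x)\<bar>)"
  define B where "B = mat n n (\<lambda>(x, y). A $$ (x, y) + (if x = y then c else 0))"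
  have B: "B \<in> carrier_mat n n" unfolding B_def by simp
  have "0 \<le> c" unfolding c_def by (simp add: sum_nonneg)
  have AB: "A $$ (x, y) = B $$ (x, y) - (if x = y then c else 0)" if "x < n" "y < n" for x y
    using that unfolding B_def by simp
  have B_nonneg: "0 \<le> B $$ (x, y)" if "x < n" "y < n" for x y
  proof (cases "x = y")
    case True
    have "\<bar>A $$ (x, x)\<bar> \<le> c" unfolding c_def
      using that by (intro member_le_sum) auto
    then show ?thesis using True that unfolding B_def by simp
  next
    case False
    then show ?thesis using that offdiag unfolding B_def by simp
  qed
  define u where "u i = (B ^\<^sub>m i) $$ (a, b) / fact i" for i
  define v where "v i = (-c) ^ i / fact i" for i
  have "summable (\<lambda>i. norm (v i))"
    using summable_exp[of c] \<open>0 \<le> c\<close>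
    by (simp add: v_def power_abs divide_inverse mult.commute abs_mult)
  then have "(\<lambda>k. \<Sum>i\<le>k. u i * v (k - i)) sums (suminf u * suminf v)"
    using summable_norm_mat_exp_entry[OF B a b] unfolding u_def[symmetric]
    by (intro Cauchy_product_sums)
  moreover have "(\<Sum>i\<le>k. u i * v (k - i)) = (A ^\<^sub>m k) $$ (a, b) / fact k" for k
    by (simp add: mat_pow_shifted_entry[OF A B AB a b] sum_divide_distrib u_def v_def
        binomial_fact field_simps)
  ultimately have "mat_exp A $$ (a, b) = suminf u * suminf v"
    using mat_exp_entry_sums[OF A a b] sums_unique2 by simp
  moreover have "0 \<le> suminf u"
    using summable_norm_cancel[OF summable_norm_mat_exp_entry[OF B a b]]
      mat_pow_entry_nonneg[OF B B_nonneg a b]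
    unfolding u_def by (intro suminf_nonneg) auto
  moreover have "suminf v = exp (-c)"
    using exp_converges[of "-c"] by (simp add: v_def[abs_def] sums_iff divide_inverse mult.commute)
  ultimately show ?thesis by simp
qed

lemma row_sum_mat_pow:
  fixes A :: "real mat"
  assumes A: "A \<in> carrier_mat n n"
    and row_sum: "\<And>x. x < n \<Longrightarrow> (\<Sum>y<n. A $$ (x, y)) = 0"
    and a: "a < n"
  shows "(\<Sum>b<n. (A ^\<^sub>m k) $$ (a, b)) = (if k = 0 then 1 else 0)"
proof (cases k)
  case 0
  then show ?thesis using A a by (simp add: sum.delta)
next
  case (Suc k')
  have "(\<Sum>b<n. (A ^\<^sub>m Suc k') $$ (a, b)) = (\<Sum>b<n. \<Sum>l<n. (A ^\<^sub>m k') $$ (a, l) * A $$ (l, b))"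
    using mat_pow_Suc_entry[OF A a] by simp
  also have "\<dots> = (\<Sum>l<n. (A ^\<^sub>m k') $$ (a, l) * (\<Sum>b<n. A $$ (l, b)))"
    unfolding sum_distrib_left by (subst sum.swap) simp
  also have "\<dots> = 0" using row_sum by simp
  finally show ?thesis using Suc by simp
qed

lemma weighted_col_sum_mat_pow:
  fixes A :: "real mat" and w :: "nat \<Rightarrow> real"
  assumes A: "A \<in> carrier_mat n n"
    and col_sum: "\<And>y. y < n \<Longrightarrow> (\<Sum>x<n. w x * A $$ (x, y)) = 0"
    and b: "b < n"
  shows "(\<Sum>a<n. w a * (A ^\<^sub>m k) $$ (a, b)) = (if k = 0 then w b else 0)"
  using b
proof (induction k arbitrary: b)
  case 0
  have "(\<Sum>a<n. w a * (A ^\<^sub>m 0) $$ (a, b)) = (\<Sum>a<n. if a = b then w b else 0)"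
    using A 0 by (intro sum.cong) auto
  then show ?case using 0 by simp
next
  case (Suc k)
  have "(\<Sum>a<n. w a * (A ^\<^sub>m Suc k) $$ (a, b))
      = (\<Sum>a<n. w a * (\<Sum>l<n. (A ^\<^sub>m k) $$ (a, l) * A $$ (l, b)))"
    using mat_pow_Suc_entry[OF A _ Suc.prems] by simp
  also have "\<dots> = (\<Sum>l<n. (\<Sum>a<n. w a * (A ^\<^sub>m k) $$ (a, l)) * A $$ (l, b))"
    unfolding sum_distrib_left sum_distrib_right by (subst sum.swap) (simp add: mult.assoc)
  also have "\<dots> = (\<Sum>l<n. (if k = 0 then w l else 0) * A $$ (l, b))"
    using Suc.IH by (intro sum.cong) auto
  also have "\<dots> = 0"
    using col_sum[OF Suc.prems] by (cases "k = 0") simp_all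
  finally show ?case by simp
qed

lemma row_sum_mat_exp:
  fixes A :: "real mat"
  assumes A: "A \<in> carrier_mat n n"
    and row_sum: "\<And>x. x < n \<Longrightarrow> (\<Sum>y<n. A $$ (x, y)) = 0"
    and a: "a < n"
  shows "(\<Sum>b<n. mat_exp A $$ (a, b)) = 1"
proof -
  have "(\<lambda>k. \<Sum>b<n. (A ^\<^sub>m k) $$ (a, b) / fact k) sums (\<Sum>b<n. mat_exp A $$ (a, b))"
    using mat_exp_entry_sums[OF A a] by (intro sums_sum) simp
  moreover have "(\<lambda>k. \<Sum>b<n. (A ^\<^sub>m k) $$ (a, b) / fact k) = (\<lambda>k. if k = 0 then 1 else 0)"
    using row_sum_mat_pow[OF A row_sum a] by (simp add: sum_divide_distrib[symmetric] fun_eq_iff)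
  ultimately show ?thesis
    using sums_single[of 0 "\<lambda>_. 1 :: real"] sums_unique2 by simp
qed

lemma weighted_col_sum_mat_exp:
  fixes A :: "real mat" and w :: "nat \<Rightarrow> real"
  assumes A: "A \<in> carrier_mat n n"
    and col_sum: "\<And>y. y < n \<Longrightarrow> (\<Sum>x<n. w x * A $$ (x, y)) = 0"
    and b: "b < n"
  shows "(\<Sum>a<n. w a * mat_exp A $$ (a, b)) = w b"
proof -
  have "(\<lambda>k. \<Sum>a<n. w a * ((A ^\<^sub>m k) $$ (a, b) / fact k)) sums (\<Sum>a<n. w a * mat_exp A $$ (a, b))"
    using mat_exp_entry_sums[OF A _ b] by (intro sums_sum sums_mult) simp
  moreover have "(\<lambda>k. \<Sum>a<n. w a * ((A ^\<^sub>m k) $$ (a, b) / fact k)) = (\<lambda>k. if k = 0 then w b else 0)"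
    using weighted_col_sum_mat_pow[OF A col_sum b]
    by (simp add: times_divide_eq_right sum_divide_distrib[symmetric] fun_eq_iff)
  ultimately show ?thesis
    using sums_single[of 0 "\<lambda>_. w b"] sums_unique2 by simp
qed

lemma mat_exp_in_stoch_p:
  fixes A :: "real mat"
  assumes A: "A \<in> carrier_mat n n"
    and offdiag: "\<And>x y. x < n \<Longrightarrow> y < n \<Longrightarrow> x \<noteq> y \<Longrightarrow> 0 \<le> A $$ (x, y)"
    and row_sum: "\<And>x. x < n \<Longrightarrow> (\<Sum>y<n. A $$ (x, y)) = 0"
    and col_sum: "\<And>y. y < n \<Longrightarrow> (\<Sum>x<n. p x * A $$ (x, y)) = 0"
  shows "mat_exp A \<in> stoch_p n p"
  using A mat_exp_entry_nonneg[OF A offdiag] row_sum_mat_exp[OF A row_sum]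
    weighted_col_sum_mat_exp[OF A col_sum]
  by (auto simp: stoch_p_def mat_exp_def)

lemma ep_mat_row_sum:
  assumes "a < n" and "k < n"
  shows "(\<Sum>b<n. ep_mat n p j k $$ (a, b)) = 0"
  using assms by (simp add: ep_mat_def sum_distrib_left[symmetric] sum_subtractf)

lemma ep_mat_weighted_col_sum:
  assumes "j < n" and "b < n" and "p (n - 1) \<noteq> 0"
  shows "(\<Sum>a<n. p a * ep_mat n p j k $$ (a, b)) = 0"
proof -
  have "(\<Sum>a<n. p a * ((if a = j then 1 else 0) - rp n p j * (if a = n - 1 then 1 else 0)))
      = p j - rp n p j * p (n - 1)"
    using assms by (simp add: right_diff_distrib sum_subtractf if_distrib[of "(*) _"] sum.delta
        ac_simps cong: if_cong)
  also have "\<dots> = 0" using assms(3) by (simp add: rp_def)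
  finally show ?thesis
    using assms(2) by (simp add: ep_mat_def sum_distrib_right[symmetric] mult.assoc[symmetric])
qed

lemma ep_mat_diag_offdiag_nonpos:
  assumes "j < n - 1" and "a < n" and "b < n" and "a \<noteq> b" and "0 \<le> rp n p j"
  shows "ep_mat n p j j $$ (a, b) \<le> 0"
  using assms by (auto simp: ep_mat_def)

lemma gen_mat_carrier: "gen_mat n p t \<in> carrier_mat n n"
  by (simp add: gen_mat_def)

lemma gen_mat_entry:
  assumes "a < n" and "b < n"
  shows "gen_mat n p t $$ (a, b) = (\<Sum>j<n - 1. t j * ep_mat n p j j $$ (a, b))"
  using assms by (simp add: gen_mat_def)

lemma gen_mat_row_sum:
  assumes "a < n"
  shows "(\<Sum>b<n. gen_mat n p t $$ (a, b)) = 0"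
proof -
  have "(\<Sum>b<n. gen_mat n p t $$ (a, b)) = (\<Sum>j<n - 1. t j * (\<Sum>b<n. ep_mat n p j j $$ (a, b)))"
    by (simp add: gen_mat_entry assms sum_distrib_left sum.swap[of _ "{..<n}"])
  also have "\<dots> = 0" using assms by (simp add: ep_mat_row_sum)
  finally show ?thesis .
qed

lemma gen_mat_weighted_col_sum:
  assumes "b < n" and "p (n - 1) \<noteq> 0"
  shows "(\<Sum>a<n. p a * gen_mat n p t $$ (a, b)) = 0"
proof -
  have "(\<Sum>a<n. p a * gen_mat n p t $$ (a, b))
      = (\<Sum>j<n - 1. t j * (\<Sum>a<n. p a * ep_mat n p j j $$ (a, b)))"
    by (simp add: gen_mat_entry assms sum_distrib_left sum.swap[of _ "{..<n}"] ac_simps)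
  also have "\<dots> = 0" using assms by (simp add: ep_mat_weighted_col_sum)
  finally show ?thesis .
qed

lemma gen_mat_offdiag_nonpos:
  assumes "\<forall>j<n. 0 \<le> p j" and "\<forall>j<n - 1. 0 \<le> t j"
    and "a < n" and "b < n" and "a \<noteq> b"
  shows "gen_mat n p t $$ (a, b) \<le> 0"
proof -
  have "t j * ep_mat n p j j $$ (a, b) \<le> 0" if "j < n - 1" for j
    using that assms ep_mat_diag_offdiag_nonpos[of j n a b p]
    by (auto simp: rp_def intro!: mult_nonneg_nonpos)
  then show ?thesis using assms(3,4) by (auto simp: gen_mat_entry intro!: sum_nonpos)
qed

theorem lemma2:
  fixes n :: nat and p t :: "nat \<Rightarrow> real"
  assumes "n > 1"
    and "\<forall>j<n. p j > 0"
    and "(\<Sum>j<n. p j) = 1"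
    and "\<forall>j<n - 1. t j \<ge> 0"
  shows "mat_exp (- gen_mat n p t) \<in> stoch_p n p"
proof (rule mat_exp_in_stoch_p)
  let ?G = "gen_mat n p t"
  have neg_entry: "(- ?G) $$ (a, b) = - ?G $$ (a, b)" if "a < n" "b < n" for a b
    using that gen_mat_carrier[of n p t] by simp
  show "- ?G \<in> carrier_mat n n" using gen_mat_carrier by simp
  show "0 \<le> (- ?G) $$ (a, b)" if "a < n" "b < n" "a \<noteq> b" for a b
    using gen_mat_offdiag_nonpos[OF _ assms(4) that] assms(2) that by (simp add: neg_entry less_imp_le)
  show "(\<Sum>b<n. (- ?G) $$ (a, b)) = 0" if "a < n" for a
    using gen_mat_row_sum[OF that] that by (simp add: neg_entry sum_negf)
  have "p (n - 1) \<noteq> 0" using assms(1,2) by (metis diff_less less_one less_trans order.irrefl)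
  then show "(\<Sum>a<n. p a * (- ?G) $$ (a, b)) = 0" if "b < n" for b
    using gen_mat_weighted_col_sum[of b n p t] that by (simp add: neg_entry sum_negf)
qed

end
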